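(* Let $X_0\neq\{0\}$ be a Banach space, $\{\Theta_s,|||\cdot|||_s\}_{s\in\mathbb N_0}$ a sequence of $BK$-spaces satisfying (F1)–(F3), and $\{g_i\}_{i=1}^\infty\in(X_0^* )^{\mathbb N}$ a $\Theta_0$-frame for $X_0$ with bounds $1\le A_0\le B_0<\infty$. Let $M:=\{\{g_i(f)\}_{i=1}^\infty: f\in X_0\}\cap\Theta_F$ and assume that for every $s\in\mathbb N_0$ the set $\{\{g_i(f)\}_{i=1}^\infty:f\in X_0\}\cap\Theta_s$ is not $\{0\}$ and $M$ is dense in it with respect to $|||\cdot|||_s$. Then there exists a sequence of Banach spaces $\{X_s\}_{s\in\mathbb N_0}$ (starting with the given $X_0$) satisfying (F1)–(F3) such that $\{g_i|_{X_F}\}_{i=1}^\infty$ is a pre-$F$-frame for $X_F$ with respect to $\Theta_F$ with bounds $A_0,B_0$ for $s=0$ and $A_s=B_s=1$ for $s\in\mathbb N$. (Namely $X_s=\{f\in X_0:\{g_i(f)\}\in\Theta_s\}$ with $\|f\|_s=|||\{g_i(f)\}|||_s$, $s\ge1$.) If moreover there exists an $F$-bounded projection from $\Theta_F$ onto $M$, then $\{g_i|_{X_F}\}$ is an $F$-frame for $X_F$ with respect to $\Theta_F$.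
   Context: Conditions (F1)–(F3) for a sequence $\{Y_s,|\cdot|_s\}_{s\in\mathbb N_0}$ of separable Banach spaces: (F1) $\{0\}\neq\bigcap_sY_s\subseteq\dots\subseteq Y_1\subseteq Y_0$; (F2) $|\cdot|_0\le|\cdot|_1\le\dots$; (F3) $Y_F:=\bigcap_sY_s$ dense in each $Y_s$. $X_F=\bigcap_sX_s$, $\Theta_F=\bigcap_s\Theta_s$. $BK$-space: Banach sequence space with continuous coordinate functionals. For a Banach space $X$ and $BK$-space $\Theta$, $\{g_i\}\subset X^*$ is a $\Theta$-frame with bounds $A,B$ if $\{g_i(f)\}\in\Theta$ and $A\|f\|\le|||\{g_i(f)\}|||\le B\|f\|$ for all $f\in X$. Pre-$F$-frame: $\{g_i\}\in(X_F^* )^{\mathbb N}$ with $\{g_i(f)\}\in\Theta_F$ for all $f\in X_F$ and for each $s$ constants $0<A_s\le B_s$ with $A_s\|f\|_s\le|||\{g_i(f)\}|||_s\le B_s\|f\|_s$, $f\in X_F$. $F$-frame: pre-$F$-frame with an $F$-bounded $V:\Theta_F\to X_F$, $V(\{g_i(f)\})=f$ for $f\in X_F$. An operator is $F$-bounded if for each $s$ there is $K_s$ with $|\,Tc\,|_s\le K_s|||c|||_s$ in the respective $s$-th norms; a projection is a linear map $\mathcal P$ with $\mathcal P^2=\mathcal P$. *)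

theory Defs
  imports "HOL-Analysis.Analysis" "HOL-Library.Function_Algebras"
begin

instantiation "fun" :: (type, real_vector) real_vector
begin
definition scaleR_fun :: "real \<Rightarrow> ('a \<Rightarrow> 'b) \<Rightarrow> 'a \<Rightarrow> 'b" where
  "scaleR_fun c f = (\<lambda>x. c *\<^sub>R f x)"
instance by standard (auto simp: scaleR_fun_def fun_eq_iff scaleR_add_right scaleR_add_left)
end

definition normed_subspace :: "'v::real_vector set \<Rightarrow> ('v \<Rightarrow> real) \<Rightarrow> bool" where
  "normed_subspace S n \<longleftrightarrow>
     0 \<in> S \<and> (\<forall>x\<in>S. \<forall>y\<in>S. x + y \<in> S) \<and> (\<forall>c x. x \<in> S \<longrightarrow> c *\<^sub>R x \<in> S) \<and>
     (\<forall>x\<in>S. 0 \<le> n x) \<and> (\<forall>x\<in>S. n x = 0 \<longleftrightarrow> x = 0) \<and>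
     (\<forall>x\<in>S. \<forall>y\<in>S. n (x + y) \<le> n x + n y) \<and>
     (\<forall>c. \<forall>x\<in>S. n (c *\<^sub>R x) = \<bar>c\<bar> * n x)"

definition complete_wrt :: "'v::real_vector set \<Rightarrow> ('v \<Rightarrow> real) \<Rightarrow> bool" where
  "complete_wrt S n \<longleftrightarrow>
     (\<forall>u. (\<forall>k. u k \<in> S) \<and> (\<forall>e>0. \<exists>N. \<forall>k\<ge>N. \<forall>l\<ge>N. n (u k - u l) < e)
        \<longrightarrow> (\<exists>x\<in>S. (\<lambda>k. n (u k - x)) \<longlonglongrightarrow> 0))"

definition dense_wrt :: "'v::real_vector set \<Rightarrow> ('v \<Rightarrow> real) \<Rightarrow> 'v set \<Rightarrow> bool" where
  "dense_wrt S n D \<longleftrightarrow> (\<forall>x\<in>S. \<forall>e>0. \<exists>d\<in>D. n (x - d) < e)"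

definition separable_wrt :: "'v::real_vector set \<Rightarrow> ('v \<Rightarrow> real) \<Rightarrow> bool" where
  "separable_wrt S n \<longleftrightarrow> (\<exists>D. D \<subseteq> S \<and> countable D \<and> dense_wrt S n D)"

definition banach_space_on :: "'v::real_vector set \<Rightarrow> ('v \<Rightarrow> real) \<Rightarrow> bool" where
  "banach_space_on S n \<longleftrightarrow> normed_subspace S n \<and> complete_wrt S n"

definition BK_space :: "(nat \<Rightarrow> real) set \<Rightarrow> ((nat \<Rightarrow> real) \<Rightarrow> real) \<Rightarrow> bool" where
  "BK_space \<Theta> n \<longleftrightarrow> banach_space_on \<Theta> n \<and> (\<forall>i. \<exists>C. \<forall>c\<in>\<Theta>. \<bar>c i\<bar> \<le> C * n c)"

definition F_conditions :: "(nat \<Rightarrow> 'v::real_vector set) \<Rightarrow> (nat \<Rightarrow> 'v \<Rightarrow> real) \<Rightarrow> bool" where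
  "F_conditions Y nY \<longleftrightarrow>
     (\<forall>s. banach_space_on (Y s) (nY s) \<and> separable_wrt (Y s) (nY s)) \<and>
     (\<Inter>s. Y s) \<noteq> {0} \<and> (\<forall>s. Y (Suc s) \<subseteq> Y s) \<and>
     (\<forall>s. \<forall>x\<in>Y (Suc s). nY s x \<le> nY (Suc s) x) \<and>
     (\<forall>s. dense_wrt (Y s) (nY s) (\<Inter>s. Y s))"

definition linear_on :: "'v::real_vector set \<Rightarrow> ('v \<Rightarrow> 'w::real_vector) \<Rightarrow> bool" where
  "linear_on S T \<longleftrightarrow> (\<forall>x\<in>S. \<forall>y\<in>S. T (x + y) = T x + T y) \<and> (\<forall>c. \<forall>x\<in>S. T (c *\<^sub>R x) = c *\<^sub>R T x)"

definition F_bounded :: "(nat \<Rightarrow> 'v::real_vector set) \<Rightarrow> (nat \<Rightarrow> 'v \<Rightarrow> real)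
     \<Rightarrow> (nat \<Rightarrow> 'w \<Rightarrow> real) \<Rightarrow> ('v \<Rightarrow> 'w) \<Rightarrow> bool" where
  "F_bounded Y nY nZ T \<longleftrightarrow> (\<forall>s. \<exists>K. \<forall>c\<in>(\<Inter>t. Y t). nZ s (T c) \<le> K * nY s c)"

text \<open>Element of X_F^*: linear on X_F and continuous w.r.t. the Frechet topology of X_F.\<close>
definition F_dual :: "(nat \<Rightarrow> 'a::real_vector set) \<Rightarrow> (nat \<Rightarrow> 'a \<Rightarrow> real) \<Rightarrow> ('a \<Rightarrow> real) \<Rightarrow> bool" where
  "F_dual X nX h \<longleftrightarrow> linear_on (\<Inter>s. X s) h \<and>
     (\<exists>s C. \<forall>f\<in>(\<Inter>t. X t). \<bar>h f\<bar> \<le> C * nX s f)"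

definition pre_F_frame :: "(nat \<Rightarrow> 'a::real_vector set) \<Rightarrow> (nat \<Rightarrow> 'a \<Rightarrow> real)
   \<Rightarrow> (nat \<Rightarrow> (nat \<Rightarrow> real) set) \<Rightarrow> (nat \<Rightarrow> (nat \<Rightarrow> real) \<Rightarrow> real)
   \<Rightarrow> (nat \<Rightarrow> 'a \<Rightarrow> real) \<Rightarrow> (nat \<Rightarrow> real) \<Rightarrow> (nat \<Rightarrow> real) \<Rightarrow> bool" where
  "pre_F_frame X nX \<Theta> n\<Theta> g A B \<longleftrightarrow>
     (\<forall>i. F_dual X nX (g i)) \<and>
     (\<forall>f\<in>(\<Inter>s. X s). (\<lambda>i. g i f) \<in> (\<Inter>s. \<Theta> s)) \<and>
     (\<forall>s. 0 < A s \<and> A s \<le> B s \<and>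
        (\<forall>f\<in>(\<Inter>t. X t). A s * nX s f \<le> n\<Theta> s (\<lambda>i. g i f) \<and> n\<Theta> s (\<lambda>i. g i f) \<le> B s * nX s f))"

definition F_frame :: "(nat \<Rightarrow> 'a::real_vector set) \<Rightarrow> (nat \<Rightarrow> 'a \<Rightarrow> real)
   \<Rightarrow> (nat \<Rightarrow> (nat \<Rightarrow> real) set) \<Rightarrow> (nat \<Rightarrow> (nat \<Rightarrow> real) \<Rightarrow> real)
   \<Rightarrow> (nat \<Rightarrow> 'a \<Rightarrow> real) \<Rightarrow> bool" where
  "F_frame X nX \<Theta> n\<Theta> g \<longleftrightarrow>
     (\<exists>A B. pre_F_frame X nX \<Theta> n\<Theta> g A B) \<and>
     (\<exists>V. (\<forall>c\<in>(\<Inter>s. \<Theta> s). V c \<in> (\<Inter>s. X s)) \<and> linear_on (\<Inter>s. \<Theta> s) V \<and>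
          F_bounded \<Theta> n\<Theta> nX V \<and> (\<forall>f\<in>(\<Inter>s. X s). V (\<lambda>i. g i f) = f))"

definition Theta_frame :: "(nat \<Rightarrow> real) set \<Rightarrow> ((nat \<Rightarrow> real) \<Rightarrow> real)
   \<Rightarrow> (nat \<Rightarrow> 'a::real_normed_vector \<Rightarrow> real) \<Rightarrow> real \<Rightarrow> real \<Rightarrow> bool" where
  "Theta_frame \<Theta> n g A B \<longleftrightarrow> (\<forall>i. bounded_linear (g i)) \<and>
     (\<forall>f. (\<lambda>i. g i f) \<in> \<Theta> \<and> A * norm f \<le> n (\<lambda>i. g i f) \<and> n (\<lambda>i. g i f) \<le> B * norm f)"

end

theory Submission
  imports Defs
begin

(* Let G f = (g_i(f))_i be the analysis operator
   of the Theta_0-frame.  It is linear, and the lower frame bound A0 >= 1 gives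
   norm f <= |||G f|||_0, so G is injective.  Put X_s = G^{-1}(Theta_s), with the norm of X_0
   for s = 0 and ||f||_s = |||G f|||_s for s >= 1; then X_0 is the whole space.

   Inside the locale
   Theta_frame_setting these facts yield (F1)-(F3) for the spaces X_s, the pre-F-frame
   inequalities (which hold by the very choice of the norms), and finally the F-frame
   property: given an F-bounded projection P onto M = range G \<inter> Theta_F, the synthesis
   operator is V = G^{-1} \<circ> P.  The theorem is then an interpretation of the locale. *)

section \<open>Normed subspaces\<close>

lemma normed_subspace_nonneg: "normed_subspace S n \<Longrightarrow> x \<in> S \<Longrightarrow> 0 \<le> n x"
  unfolding normed_subspace_def by simp

lemma normed_subspace_eq_0: "normed_subspace S n \<Longrightarrow> x \<in> S \<Longrightarrow> n x = 0 \<longleftrightarrow> x = 0"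
  unfolding normed_subspace_def by simp

lemma normed_subspace_zero:
  assumes "normed_subspace S n" shows "n 0 = 0"
proof -
  have "0 \<in> S" using assms unfolding normed_subspace_def by simp
  then show ?thesis using normed_subspace_eq_0[OF assms] by simp
qed

lemma normed_subspace_uminus:
  assumes "normed_subspace S n" "x \<in> S" shows "- x \<in> S" "n (- x) = n x"
proof -
  have scale: "c *\<^sub>R x \<in> S" "n (c *\<^sub>R x) = \<bar>c\<bar> * n x" for c
    using assms unfolding normed_subspace_def by auto
  show "- x \<in> S" using scale(1)[of "- 1"] by simp
  show "n (- x) = n x" using scale(2)[of "- 1"] by simp
qed

lemma normed_subspace_diff:
  assumes "normed_subspace S n" "x \<in> S" "y \<in> S" shows "x - y \<in> S"
  using assms normed_subspace_uminus[OF assms(1,3)] unfolding normed_subspace_def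
  by (metis diff_conv_add_uminus)

lemma normed_subspace_commute:
  assumes "normed_subspace S n" "x \<in> S" "y \<in> S" shows "n (x - y) = n (y - x)"
  using normed_subspace_uminus(2)[OF assms(1) normed_subspace_diff[OF assms]] by (metis minus_diff_eq)

lemma normed_subspace_triangle:
  assumes "normed_subspace S n" "x \<in> S" "y \<in> S" "z \<in> S"
  shows "n (x - z) \<le> n (x - y) + n (y - z)"
proof -
  have "x - z = (x - y) + (y - z)" by simp
  then show ?thesis
    using assms normed_subspace_diff[OF assms(1)] unfolding normed_subspace_def by metis
qed

lemma normed_subspace_UNIV: "normed_subspace (UNIV :: 'a::real_normed_vector set) norm"
  unfolding normed_subspace_def by (auto simp: norm_triangle_ineq)

definition cauchy_wrt :: "('v::real_vector \<Rightarrow> real) \<Rightarrow> (nat \<Rightarrow> 'v) \<Rightarrow> bool" where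
  "cauchy_wrt n u \<longleftrightarrow> (\<forall>e>0. \<exists>N. \<forall>k\<ge>N. \<forall>l\<ge>N. n (u k - u l) < e)"

lemma complete_wrt_cauchy:
  "complete_wrt S n \<longleftrightarrow>
     (\<forall>u. (\<forall>k. u k \<in> S) \<and> cauchy_wrt n u \<longrightarrow> (\<exists>x\<in>S. (\<lambda>k. n (u k - x)) \<longlonglongrightarrow> 0))"
  unfolding complete_wrt_def cauchy_wrt_def ..

lemma cauchy_wrt_norm: "cauchy_wrt norm u \<longleftrightarrow> Cauchy u"
  unfolding cauchy_wrt_def Cauchy_def dist_norm ..

lemma cauchy_wrt_dominated:
  assumes "cauchy_wrt n u" "\<And>k l. m (v k - v l) \<le> n (u k - u l)"
  shows "cauchy_wrt m v"
  unfolding cauchy_wrt_def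
proof (intro allI impI)
  fix e :: real assume "0 < e"
  then obtain N where "\<forall>k\<ge>N. \<forall>l\<ge>N. n (u k - u l) < e" using assms(1) unfolding cauchy_wrt_def by blast
  then show "\<exists>N. \<forall>k\<ge>N. \<forall>l\<ge>N. m (v k - v l) < e" using assms(2) order.strict_trans1 by blast
qed

lemma complete_wrt_UNIV: "complete_wrt (UNIV :: 'a::banach set) norm"
  unfolding complete_wrt_cauchy cauchy_wrt_norm
proof (intro allI impI)
  fix u :: "nat \<Rightarrow> 'a" assume "(\<forall>k. u k \<in> UNIV) \<and> Cauchy u"
  then obtain x where "u \<longlonglongrightarrow> x" using Cauchy_convergent_iff convergent_def by blast
  then have "(\<lambda>k. norm (u k - x)) \<longlonglongrightarrow> 0" using tendsto_norm_zero[OF LIM_zero] by blast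
  then show "\<exists>x\<in>UNIV. (\<lambda>k. norm (u k - x)) \<longlonglongrightarrow> 0" by blast
qed

text \<open>Separability passes to arbitrary subsets (pick near-best points of the subset
  close to the elements of a countable dense set).\<close>
lemma separable_wrt_subset:
  assumes ns: "normed_subspace S n" and sep: "separable_wrt S n" and T: "T \<subseteq> S"
  shows "separable_wrt T n"
proof -
  obtain D where D: "D \<subseteq> S" "countable D" "dense_wrt S n D"
    using sep unfolding separable_wrt_def by blast
  define E where "E = {(d, k::nat). d \<in> D \<and> (\<exists>t\<in>T. n (d - t) < 1 / Suc k)}"
  define ch where "ch = (\<lambda>(d, k::nat). SOME t. t \<in> T \<and> n (d - t) < 1 / Suc k)"
  have ch: "ch p \<in> T \<and> n (fst p - ch p) < 1 / Suc (snd p)" if "p \<in> E" for p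
    using that unfolding E_def ch_def by (auto intro: someI2_ex)
  have "countable E"
    by (rule countable_subset[of _ "D \<times> UNIV"]) (use D(2) in \<open>auto simp: E_def\<close>)
  moreover have "dense_wrt T n (ch ` E)" unfolding dense_wrt_def
  proof (intro ballI allI impI)
    fix x e assume x: "x \<in> T" and e: "(0::real) < e"
    obtain k :: nat where k: "1 / Suc k < e / 2"
      by (metis e half_gt_zero_iff nat_approx_posE)
    have "0 < 1 / real (Suc k)" by simp
    then obtain d where d: "d \<in> D" "n (x - d) < 1 / Suc k"
      using D(3) x T unfolding dense_wrt_def by blast
    have "n (d - x) < 1 / Suc k" using normed_subspace_commute[OF ns, of x d] d x T D(1) by (metis subsetD)
    then have dk: "(d, k) \<in> E" using d x unfolding E_def by auto
    have "n (x - ch (d, k)) \<le> n (x - d) + n (d - ch (d, k))"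
      using normed_subspace_triangle[OF ns, of x d "ch (d, k)"] x T ch[OF dk] D(1) d by auto
    also have "\<dots> < e" using d ch[OF dk] k by simp
    finally show "\<exists>t\<in>ch ` E. n (x - t) < e" using dk by blast
  qed
  ultimately show ?thesis using ch unfolding separable_wrt_def by (intro exI[of _ "ch ` E"]) auto
qed

lemma dense_wrt_nontrivial:
  assumes ns: "normed_subspace S n" and dense: "dense_wrt S n D" and "x \<in> S" "x \<noteq> 0"
  shows "D \<noteq> {0}"
proof
  assume D: "D = {0}"
  have "0 < n x"
    using normed_subspace_nonneg[OF ns assms(3)] normed_subspace_eq_0[OF ns assms(3)] assms(4) by simp
  then obtain d where "d \<in> D" "n (x - d) < n x" using dense assms(3) unfolding dense_wrt_def by blast
  then show False using D by simp
qed

section \<open>Transport of the Banach structure along a linear map\<close>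

lemma normed_subspace_pullback:
  assumes G: "linear G" "inj G" and ns: "normed_subspace S n"
  shows "normed_subspace (G -` S) (\<lambda>x. n (G x))"
proof -
  have "G x = 0 \<longleftrightarrow> x = 0" for x using G linear_injective_0 linear_0 by metis
  then show ?thesis
    using ns unfolding normed_subspace_def
    by (simp add: linear_0[OF G(1)] linear_add[OF G(1)] linear_scale[OF G(1)])
qed

lemma separable_wrt_pullback:
  assumes G: "linear G" and ns: "normed_subspace S n" and sep: "separable_wrt S n"
    and T: "G ` T \<subseteq> S" and dom: "\<And>h. q h \<le> n (G h)"
  shows "separable_wrt T q"
proof -
  obtain D where D: "D \<subseteq> G ` T" "countable D" "dense_wrt (G ` T) n D"
    using separable_wrt_subset[OF ns sep T] unfolding separable_wrt_def by blast
  define pre where "pre = (\<lambda>d. SOME f. f \<in> T \<and> G f = d)"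
  have pre: "pre d \<in> T \<and> G (pre d) = d" if "d \<in> D" for d
    unfolding pre_def by (rule someI_ex) (use D(1) that in auto)
  have "dense_wrt T q (pre ` D)" unfolding dense_wrt_def
  proof (intro ballI allI impI)
    fix x e assume "x \<in> T" "(0::real) < e"
    then obtain d where d: "d \<in> D" "n (G x - d) < e" using D(3) unfolding dense_wrt_def by blast
    have "q (x - pre d) \<le> n (G x - d)" using dom[of "x - pre d"] pre[OF d(1)] by (simp add: linear_diff[OF G])
    then show "\<exists>t\<in>pre ` D. q (x - t) < e" using d by force
  qed
  then show ?thesis unfolding separable_wrt_def using pre D(2) by (intro exI[of _ "pre ` D"]) auto
qed

lemma dense_wrt_pullback:
  assumes G: "linear G" and dense: "dense_wrt (G ` T) n (G ` D)" and dom: "\<And>h. q h \<le> n (G h)"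
  shows "dense_wrt T q D"
  unfolding dense_wrt_def
proof (intro ballI allI impI)
  fix x e assume "x \<in> T" "(0::real) < e"
  then obtain f where f: "f \<in> D" "n (G x - G f) < e" using dense unfolding dense_wrt_def by blast
  have "q (x - f) \<le> n (G x - G f)" using dom[of "x - f"] by (simp add: linear_diff[OF G])
  then show "\<exists>d\<in>D. q (x - d) < e" using f by force
qed

text \<open>A Cauchy sequence (u_k) for n \<circ> G has G u_k convergent to some c in S; it is also Cauchy
  in the Banach space, with limit f; comparing both limits in the weaker norm n0 gives
  c = G f, so u_k converges to f in the pulled-back norm.\<close>
lemma complete_wrt_pullback:
  fixes G :: "'a::banach \<Rightarrow> 'v::real_vector"
  assumes G: "linear G"
    and S0: "normed_subspace S0 n0" and sub: "S \<subseteq> S0" and weaker: "\<And>c. c \<in> S \<Longrightarrow> n0 c \<le> n c"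
    and S: "normed_subspace S n" "complete_wrt S n"
    and into: "\<And>x. G x \<in> S0" and lower: "\<And>x. norm x \<le> n0 (G x)" and upper: "\<And>x. n0 (G x) \<le> B * norm x"
  shows "complete_wrt (G -` S) (\<lambda>x. n (G x))"
  unfolding complete_wrt_cauchy
proof (intro allI impI)
  fix u assume u: "(\<forall>k. u k \<in> G -` S) \<and> cauchy_wrt (\<lambda>x. n (G x)) u"
  have GuS: "G (u k) \<in> S" for k using u by blast
  have Gu_diff: "G (u k - u l) = G (u k) - G (u l)" for k l by (rule linear_diff[OF G])
  have "cauchy_wrt n (\<lambda>k. G (u k))"
    by (rule cauchy_wrt_dominated[of "\<lambda>x. n (G x)" u]) (use u Gu_diff in simp_all)
  then obtain c where c: "c \<in> S" "(\<lambda>k. n (G (u k) - c)) \<longlonglongrightarrow> 0"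
    using S(2)[unfolded complete_wrt_cauchy, rule_format, of "\<lambda>k. G (u k)"] GuS by blast
  have norm_dominated: "norm (u k - u l) \<le> n (G (u k - u l))" for k l
    using lower[of "u k - u l"] weaker[OF normed_subspace_diff[OF S(1) GuS GuS], of k l] Gu_diff
    by simp
  have "cauchy_wrt norm u"
    by (rule cauchy_wrt_dominated[of "\<lambda>x. n (G x)" u]) (use u norm_dominated in simp_all)
  then have "Cauchy u" by (simp add: cauchy_wrt_norm)
  then obtain f where f: "u \<longlonglongrightarrow> f" using Cauchy_convergent_iff convergent_def by blast
  have bound: "n0 (c - G f) \<le> n (G (u k) - c) + B * norm (u k - f)" for k
  proof -
    have "c \<in> S0" "G (u k) \<in> S0" using sub c(1) GuS by auto
    then have "n0 (c - G f) \<le> n0 (c - G (u k)) + n0 (G (u k) - G f)"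
      using normed_subspace_triangle[OF S0 _ _ into] by blast
    moreover have "n0 (c - G (u k)) \<le> n (G (u k) - c)"
      using weaker[OF normed_subspace_diff[OF S(1) c(1) GuS]] normed_subspace_commute[OF S(1) c(1) GuS]
      by simp
    moreover have "n0 (G (u k) - G f) \<le> B * norm (u k - f)"
      using upper[of "u k - f"] by (simp add: linear_diff[OF G])
    ultimately show ?thesis by linarith
  qed
  have "(\<lambda>k. n (G (u k) - c) + B * norm (u k - f)) \<longlonglongrightarrow> 0"
    using tendsto_add_zero[OF c(2) tendsto_mult_right_zero[OF tendsto_norm_zero[OF LIM_zero[OF f]]]] .
  then have "n0 (c - G f) \<le> 0"
    by (rule tendsto_le[OF trivial_limit_sequentially _ tendsto_const]) (use bound in simp)
  moreover have cf: "c - G f \<in> S0" using normed_subspace_diff[OF S0 _ into] sub c(1) by blast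
  ultimately have "n0 (c - G f) = 0" using normed_subspace_nonneg[OF S0 cf] by linarith
  then have "c = G f" using normed_subspace_eq_0[OF S0 cf] by simp
  then have "(\<lambda>k. n (G (u k - f))) \<longlonglongrightarrow> 0" using c(2) by (simp add: linear_diff[OF G])
  moreover have "f \<in> G -` S" using c(1) \<open>c = G f\<close> by simp
  ultimately show "\<exists>x\<in>G -` S. (\<lambda>k. n (G (u k - x))) \<longlonglongrightarrow> 0" by blast
qed

lemma F_conditions_chain:
  assumes "F_conditions Y nY" "t \<le> s"
  shows "Y s \<subseteq> Y t \<and> (\<forall>x\<in>Y s. nY t x \<le> nY s x)"
  using assms(2)
proof (induction s rule: dec_induct)
  case (step s)
  have "Y (Suc s) \<subseteq> Y s" "\<And>x. x \<in> Y (Suc s) \<Longrightarrow> nY s x \<le> nY (Suc s) x"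
    using assms(1) unfolding F_conditions_def by auto
  then show ?case using step.IH by (blast intro: order_trans)
qed simp

section \<open>The spaces generated by a frame\<close>

definition analysis :: "(nat \<Rightarrow> 'a \<Rightarrow> real) \<Rightarrow> 'a \<Rightarrow> nat \<Rightarrow> real" where
  "analysis g f = (\<lambda>i. g i f)"

lemma analysis_linear:
  assumes "\<And>i. bounded_linear (g i)" shows "linear (analysis g)"
  using assms[THEN bounded_linear.linear]
  by (intro linearI) (auto simp: analysis_def scaleR_fun_def linear_add linear_scale)

lemma F_dual_bounded_linear:
  assumes "bounded_linear h" "nX 0 = norm" shows "F_dual X nX h"
proof -
  obtain K where K: "\<And>x. norm (h x) \<le> norm x * K" using bounded_linear.bounded[OF assms(1)] by blast
  have "linear h" using assms(1) by (rule bounded_linear.linear)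
  then have "linear_on (\<Inter>s. X s) h" unfolding linear_on_def by (simp add: linear_add linear_scale)
  moreover have "\<forall>f\<in>(\<Inter>t. X t). \<bar>h f\<bar> \<le> K * nX 0 f" using K assms(2) by (simp add: mult.commute)
  ultimately show ?thesis unfolding F_dual_def by blast
qed

locale Theta_frame_setting =
  fixes g :: "nat \<Rightarrow> 'a::banach \<Rightarrow> real"
    and \<Theta> :: "nat \<Rightarrow> (nat \<Rightarrow> real) set" and n\<Theta> :: "nat \<Rightarrow> (nat \<Rightarrow> real) \<Rightarrow> real"
    and A0 B0 :: real
  assumes F: "F_conditions \<Theta> n\<Theta>"
    and frame: "Theta_frame (\<Theta> 0) (n\<Theta> 0) g A0 B0"
    and lower_ge_1: "1 \<le> A0"
begin

abbreviation G :: "'a \<Rightarrow> nat \<Rightarrow> real" where "G \<equiv> analysis g"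

definition X :: "nat \<Rightarrow> 'a set" where "X s = G -` \<Theta> s"

definition nX :: "nat \<Rightarrow> 'a \<Rightarrow> real" where
  "nX s = (if s = 0 then norm else (\<lambda>f. n\<Theta> s (G f)))"

lemma Theta_normed: "normed_subspace (\<Theta> s) (n\<Theta> s)" and Theta_complete: "complete_wrt (\<Theta> s) (n\<Theta> s)"
  and Theta_separable: "separable_wrt (\<Theta> s) (n\<Theta> s)"
  using F unfolding F_conditions_def banach_space_on_def by auto

lemma Theta_in_Theta0: "\<Theta> s \<subseteq> \<Theta> 0" and n\<Theta>0_le: "c \<in> \<Theta> s \<Longrightarrow> n\<Theta> 0 c \<le> n\<Theta> s c"
  using F_conditions_chain[OF F, of 0 s] by auto

lemma G_linear: "linear G"
  using frame unfolding Theta_frame_def by (intro analysis_linear) auto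

lemma G_in_Theta0: "G f \<in> \<Theta> 0" and G_upper: "n\<Theta> 0 (G f) \<le> B0 * norm f"
  using frame unfolding Theta_frame_def analysis_def by auto

text \<open>The lower frame bound A0 \<ge> 1 makes the norm of X_0 dominated by |||G \<cdot>|||_0.\<close>
lemma norm_le_n\<Theta>0: "norm f \<le> n\<Theta> 0 (G f)"
proof -
  have "norm f \<le> A0 * norm f" using lower_ge_1 by (simp add: mult_le_cancel_right1)
  then show ?thesis using frame unfolding Theta_frame_def analysis_def by (meson order_trans)
qed

lemma G_inj: "inj G"
proof -
  have "G f = 0 \<Longrightarrow> f = 0" for f
    using norm_le_n\<Theta>0[of f] normed_subspace_zero[OF Theta_normed] by simp
  then show ?thesis using G_linear linear_injective_0 by blast
qed

lemma nX_dominated: "nX s h \<le> n\<Theta> s (G h)"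
  using norm_le_n\<Theta>0[of h] unfolding nX_def by auto

lemma nX0: "nX 0 = norm"
  by (simp add: nX_def)

lemma X0: "X 0 = UNIV"
  using G_in_Theta0 unfolding X_def by auto

lemma X_Inter: "(\<Inter>s. X s) = G -` (\<Inter>s. \<Theta> s)"
  unfolding X_def by auto

lemma X_banach: "banach_space_on (X s) (nX s)"
proof (cases "s = 0")
  case True
  then show ?thesis using X0 normed_subspace_UNIV complete_wrt_UNIV
    unfolding banach_space_on_def nX_def by simp
next
  case False
  have "complete_wrt (G -` \<Theta> s) (\<lambda>x. n\<Theta> s (G x))"
    by (rule complete_wrt_pullback[of G "\<Theta> 0" "n\<Theta> 0" "\<Theta> s" "n\<Theta> s" B0])
      (auto simp: G_linear Theta_normed Theta_in_Theta0 n\<Theta>0_le Theta_complete G_in_Theta0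
        norm_le_n\<Theta>0 G_upper)
  with False show ?thesis
    using normed_subspace_pullback[OF G_linear G_inj Theta_normed]
    unfolding banach_space_on_def X_def nX_def by simp
qed

lemma X_separable: "separable_wrt (X s) (nX s)"
  by (rule separable_wrt_pullback[of G "\<Theta> s" "n\<Theta> s" "X s" "nX s"])
    (auto simp: G_linear Theta_normed Theta_separable nX_dominated X_def)

lemma X_dense:
  assumes "dense_wrt (range G \<inter> \<Theta> s) (n\<Theta> s) (range G \<inter> (\<Inter>t. \<Theta> t))"
  shows "dense_wrt (X s) (nX s) (\<Inter>s. X s)"
proof (rule dense_wrt_pullback[of G _ "n\<Theta> s"])
  show "dense_wrt (G ` X s) (n\<Theta> s) (G ` (\<Inter>s. X s))"
  proof -
    have "G ` X s = range G \<inter> \<Theta> s" by (simp add: X_def Int_commute)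
    moreover have "G ` (\<Inter>s. X s) = range G \<inter> (\<Inter>t. \<Theta> t)"
      unfolding X_Inter by (simp add: Int_commute)
    ultimately show ?thesis using assms by simp
  qed
qed (auto simp: G_linear nX_dominated)

lemma X_F_conditions:
  assumes nontrivial: "\<exists>x::'a. x \<noteq> 0"
    and dense: "\<And>s. dense_wrt (range G \<inter> \<Theta> s) (n\<Theta> s) (range G \<inter> (\<Inter>t. \<Theta> t))"
  shows "F_conditions X nX"
proof -
  obtain x :: 'a where "x \<noteq> 0" using nontrivial by blast
  moreover have "dense_wrt UNIV norm (\<Inter>s. X s)" using X_dense[OF dense, of 0] unfolding X0 nX0 .
  ultimately have nontrivial_X_F: "(\<Inter>s. X s) \<noteq> {0}"
    using dense_wrt_nontrivial[OF normed_subspace_UNIV] by blast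
  have decreasing: "X (Suc s) \<subseteq> X s" for s
    using F_conditions_chain[OF F, of s "Suc s"] unfolding X_def by auto
  have increasing: "nX s x \<le> nX (Suc s) x" if "x \<in> X (Suc s)" for s x
  proof -
    have Gx: "G x \<in> \<Theta> (Suc s)" using that by (simp add: X_def)
    show ?thesis
    proof (cases "s = 0")
      case True
      then show ?thesis using norm_le_n\<Theta>0[of x] n\<Theta>0_le[OF Gx] by (simp add: nX_def)
    next
      case False
      then show ?thesis using F_conditions_chain[OF F, of s "Suc s"] Gx by (simp add: nX_def)
    qed
  qed
  show ?thesis
    unfolding F_conditions_def
    using X_banach X_separable X_dense[OF dense] nontrivial_X_F decreasing increasing by simp
qed

text \<open>The frame inequalities: for s = 0 they are those of the Theta_0-frame, for s \<ge> 1
  they are equalities by the definition of the norms.\<close>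
lemma pre_F_frame:
  assumes "A0 \<le> B0"
  shows "pre_F_frame X nX \<Theta> n\<Theta> g (\<lambda>s. if s = 0 then A0 else 1) (\<lambda>s. if s = 0 then B0 else 1)"
  using frame assms lower_ge_1 unfolding pre_F_frame_def Theta_frame_def
  by (auto simp: F_dual_bounded_linear nX_def X_def analysis_def)

lemma F_frame_from_projection:
  assumes pre: "pre_F_frame X nX \<Theta> n\<Theta> g A B"
    and P: "linear_on (\<Inter>s. \<Theta> s) P" "P ` (\<Inter>s. \<Theta> s) = range G \<inter> (\<Inter>t. \<Theta> t)"
      "\<forall>c\<in>(\<Inter>s. \<Theta> s). P (P c) = P c" "F_bounded \<Theta> n\<Theta> n\<Theta> P"
  shows "F_frame X nX \<Theta> n\<Theta> g"
proof -
  define V where "V = inv G \<circ> P"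
  have GV: "G (V c) = P c" and PF: "P c \<in> (\<Inter>t. \<Theta> t)" if "c \<in> (\<Inter>s. \<Theta> s)" for c
  proof -
    have "P c \<in> range G \<inter> (\<Inter>t. \<Theta> t)" using that P(2) by blast
    then show "G (V c) = P c" "P c \<in> (\<Inter>t. \<Theta> t)" by (auto simp: V_def f_inv_into_f)
  qed
  have VXF: "V c \<in> (\<Inter>s. X s)" if "c \<in> (\<Inter>s. \<Theta> s)" for c
    using GV[OF that] PF[OF that] X_Inter by auto
  have "linear_on (\<Inter>s. \<Theta> s) V"
    using P(1) Theta_normed GV G_inj
    unfolding linear_on_def normed_subspace_def
    by (auto simp: V_def inv_f_eq linear_add[OF G_linear] linear_scale[OF G_linear])
  moreover have "F_bounded \<Theta> n\<Theta> nX V"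
    unfolding F_bounded_def
  proof
    fix s
    obtain K where K: "\<forall>c\<in>(\<Inter>t. \<Theta> t). n\<Theta> s (P c) \<le> K * n\<Theta> s c"
      using P(4) unfolding F_bounded_def by blast
    have "nX s (V c) \<le> K * n\<Theta> s c" if "c \<in> (\<Inter>t. \<Theta> t)" for c
      using nX_dominated[of s "V c"] GV[OF that] K that by fastforce
    then show "\<exists>K. \<forall>c\<in>(\<Inter>t. \<Theta> t). nX s (V c) \<le> K * n\<Theta> s c" by blast
  qed
  moreover have "V (\<lambda>i. g i f) = f" if "f \<in> (\<Inter>s. X s)" for f
  proof -
    have "G f \<in> P ` (\<Inter>s. \<Theta> s)" using that X_Inter P(2) by auto
    then have "P (G f) = G f" using P(3) by auto
    then show ?thesis using G_inj by (simp add: V_def analysis_def[symmetric])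
  qed
  ultimately show ?thesis
    unfolding F_frame_def using pre VXF by blast
qed

end

theorem theorem4p2:
  fixes g :: "nat \<Rightarrow> 'a::banach \<Rightarrow> real"
    and \<Theta> :: "nat \<Rightarrow> (nat \<Rightarrow> real) set"
    and n\<Theta> :: "nat \<Rightarrow> (nat \<Rightarrow> real) \<Rightarrow> real"
    and A0 B0 :: real
  assumes X0_nontriv: "\<exists>x::'a. x \<noteq> 0"
    and BK: "\<forall>s. BK_space (\<Theta> s) (n\<Theta> s)"
    and F: "F_conditions \<Theta> n\<Theta>"
    and frame: "Theta_frame (\<Theta> 0) (n\<Theta> 0) g A0 B0"
    and bounds: "1 \<le> A0" "A0 \<le> B0"
    and nontriv: "\<forall>s. range (\<lambda>f. (\<lambda>i. g i f)) \<inter> \<Theta> s \<noteq> {0}"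
    and dense: "\<forall>s. dense_wrt (range (\<lambda>f. (\<lambda>i. g i f)) \<inter> \<Theta> s) (n\<Theta> s)
                        (range (\<lambda>f. (\<lambda>i. g i f)) \<inter> (\<Inter>t. \<Theta> t))"
  shows "\<exists>X nX. X 0 = UNIV \<and> nX 0 = norm \<and>
           (\<forall>s\<ge>1. X s = {f. (\<lambda>i. g i f) \<in> \<Theta> s} \<and> (\<forall>f\<in>X s. nX s f = n\<Theta> s (\<lambda>i. g i f))) \<and>
           F_conditions X nX \<and>
           pre_F_frame X nX \<Theta> n\<Theta> g (\<lambda>s. if s = 0 then A0 else 1) (\<lambda>s. if s = 0 then B0 else 1) \<and>
           ((\<exists>P. linear_on (\<Inter>s. \<Theta> s) P \<and>
                 P ` (\<Inter>s. \<Theta> s) = range (\<lambda>f. (\<lambda>i. g i f)) \<inter> (\<Inter>t. \<Theta> t) \<and>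
                 (\<forall>c\<in>(\<Inter>s. \<Theta> s). P (P c) = P c) \<and>
                 F_bounded \<Theta> n\<Theta> n\<Theta> P)
            \<longrightarrow> F_frame X nX \<Theta> n\<Theta> g)"
proof -
  interpret Theta_frame_setting g \<Theta> n\<Theta> A0 B0
    using F frame bounds(1) by unfold_locales
  have G_eq: "(\<lambda>f. (\<lambda>i. g i f)) = analysis g" by (simp add: analysis_def fun_eq_iff)
  have "F_conditions X nX"
    using X_F_conditions X0_nontriv dense unfolding G_eq by blast
  moreover have "X s = {f. (\<lambda>i. g i f) \<in> \<Theta> s} \<and> (\<forall>f\<in>X s. nX s f = n\<Theta> s (\<lambda>i. g i f))" if "s \<ge> 1" for s
    using that by (simp add: X_def nX_def vimage_def analysis_def)
  ultimately show ?thesis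
    using X0 pre_F_frame[OF bounds(2)] F_frame_from_projection[OF pre_F_frame[OF bounds(2)]]
    unfolding G_eq by (intro exI[of _ X] exI[of _ nX]) (auto simp: nX_def)
qed

end
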